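(* For every formula $\varphi\in\mathcal{L}^{\Box}$ (i.e. not containing $\mathrel{\Diamond\!\!\to}$), $\varphi$ is derivable in $\mathsf{ConstCK}$ if and only if $\varphi$ is derivable in $\mathsf{ConstCK}^{\Box}$.
   Context: Language $\mathcal{L}$: formulas $\varphi ::= p \mid \bot \mid \varphi\wedge\varphi \mid \varphi\vee\varphi \mid \varphi\to\varphi \mid \varphi \mathrel{\Box\!\!\to} \varphi \mid \varphi \mathrel{\Diamond\!\!\to}\varphi$; $\mathcal{L}^\Box$ is the fragment without $\mathrel{\Diamond\!\!\to}$. $\neg\varphi:=\varphi\to\bot$, $\top:=\neg\bot$, $\varphi\leftrightarrow\psi:=(\varphi\to\psi)\wedge(\psi\to\varphi)$. Axioms/rules: CM$_\Box$: $(\varphi\mathrel{\Box\!\!\to}\psi\wedge\chi)\to(\varphi\mathrel{\Box\!\!\to}\psi)\wedge(\varphi\mathrel{\Box\!\!\to}\chi)$; CC$_\Box$: $(\varphi\mathrel{\Box\!\!\to}\psi)\wedge(\varphi\mathrel{\Box\!\!\to}\chi)\to(\varphi\mathrel{\Box\!\!\to}\psi\wedge\chi)$; CN$_\Box$: $\varphi\mathrel{\Box\!\!\to}\top$; CN$_\Diamond$: $\neg(\varphi\mathrel{\Diamond\!\!\to}\bot)$; CK$_\Diamond$: $(\varphi\mathrel{\Box\!\!\to}(\psi\to\chi))\to((\varphi\mathrel{\Diamond\!\!\to}\psi)\to(\varphi\mathrel{\Diamond\!\!\to}\chi))$; RA$_\Box$: from $\varphi\leftrightarrow\rho$ infer $(\varphi\mathrel{\Box\!\!\to}\psi)\leftrightarrow(\rho\mathrel{\Box\!\!\to}\psi)$;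 RC$_\Box$: from $\psi\leftrightarrow\chi$ infer $(\varphi\mathrel{\Box\!\!\to}\psi)\leftrightarrow(\varphi\mathrel{\Box\!\!\to}\chi)$; RA$_\Diamond$, RC$_\Diamond$: the same with $\mathrel{\Diamond\!\!\to}$. $\mathsf{ConstCK}^\Box$: in language $\mathcal{L}^\Box$, any axiomatisation of intuitionistic propositional logic with modus ponens plus RA$_\Box$, RC$_\Box$, CM$_\Box$, CC$_\Box$, CN$_\Box$. $\mathsf{ConstCK}$: in language $\mathcal{L}$, intuitionistic propositional logic with modus ponens plus CM$_\Box$, CC$_\Box$, CN$_\Box$, CN$_\Diamond$, CK$_\Diamond$, RA$_\Box$, RC$_\Box$, RA$_\Diamond$, RC$_\Diamond$. *)

theory Defs
  imports Main
begin

datatype form =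
    Atom nat
  | Bot
  | And form form
  | Or form form
  | Imp form form
  | BoxArr form form   (* strict conditional  phi []-> psi *)
  | DiaArr form form   (* might conditional   phi <>-> psi *)

definition Neg :: "form \<Rightarrow> form" where "Neg a = Imp a Bot"
definition Top :: form where "Top = Neg Bot"
definition Iff :: "form \<Rightarrow> form \<Rightarrow> form" where "Iff a b = And (Imp a b) (Imp b a)"

fun box_only :: "form \<Rightarrow> bool" where
  "box_only (Atom p) = True"
| "box_only Bot = True"
| "box_only (And a b) = (box_only a \<and> box_only b)"
| "box_only (Or a b) = (box_only a \<and> box_only b)"
| "box_only (Imp a b) = (box_only a \<and> box_only b)"
| "box_only (BoxArr a b) = (box_only a \<and> box_only b)"
| "box_only (DiaArr a b) = False"

inductive ipc_axiom :: "form \<Rightarrow> bool" where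
  "ipc_axiom (Imp a (Imp b a))"
| "ipc_axiom (Imp (Imp a (Imp b c)) (Imp (Imp a b) (Imp a c)))"
| "ipc_axiom (Imp (And a b) a)"
| "ipc_axiom (Imp (And a b) b)"
| "ipc_axiom (Imp a (Imp b (And a b)))"
| "ipc_axiom (Imp a (Or a b))"
| "ipc_axiom (Imp b (Or a b))"
| "ipc_axiom (Imp (Imp a c) (Imp (Imp b c) (Imp (Or a b) c)))"
| "ipc_axiom (Imp Bot a)"

inductive ConstCK_box :: "form \<Rightarrow> bool" where
  ipc: "ipc_axiom a \<Longrightarrow> box_only a \<Longrightarrow> ConstCK_box a"
| mp: "ConstCK_box (Imp a b) \<Longrightarrow> ConstCK_box a \<Longrightarrow> ConstCK_box b"
| CM_box: "box_only a \<Longrightarrow> box_only b \<Longrightarrow> box_only c \<Longrightarrow>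
    ConstCK_box (Imp (BoxArr a (And b c)) (And (BoxArr a b) (BoxArr a c)))"
| CC_box: "box_only a \<Longrightarrow> box_only b \<Longrightarrow> box_only c \<Longrightarrow>
    ConstCK_box (Imp (And (BoxArr a b) (BoxArr a c)) (BoxArr a (And b c)))"
| CN_box: "box_only a \<Longrightarrow> ConstCK_box (BoxArr a Top)"
| RA_box: "ConstCK_box (Iff a r) \<Longrightarrow> box_only b \<Longrightarrow>
    ConstCK_box (Iff (BoxArr a b) (BoxArr r b))"
| RC_box: "ConstCK_box (Iff b c) \<Longrightarrow> box_only a \<Longrightarrow>
    ConstCK_box (Iff (BoxArr a b) (BoxArr a c))"

inductive ConstCK :: "form \<Rightarrow> bool" where
  ipc: "ipc_axiom a \<Longrightarrow> ConstCK a"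
| mp: "ConstCK (Imp a b) \<Longrightarrow> ConstCK a \<Longrightarrow> ConstCK b"
| CM_box: "ConstCK (Imp (BoxArr a (And b c)) (And (BoxArr a b) (BoxArr a c)))"
| CC_box: "ConstCK (Imp (And (BoxArr a b) (BoxArr a c)) (BoxArr a (And b c)))"
| CN_box: "ConstCK (BoxArr a Top)"
| CN_dia: "ConstCK (Neg (DiaArr a Bot))"
| CK_dia: "ConstCK (Imp (BoxArr a (Imp b c)) (Imp (DiaArr a b) (DiaArr a c)))"
| RA_box: "ConstCK (Iff a r) \<Longrightarrow> ConstCK (Iff (BoxArr a b) (BoxArr r b))"
| RC_box: "ConstCK (Iff b c) \<Longrightarrow> ConstCK (Iff (BoxArr a b) (BoxArr a c))"
| RA_dia: "ConstCK (Iff a r) \<Longrightarrow> ConstCK (Iff (DiaArr a b) (DiaArr r b))"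
| RC_dia: "ConstCK (Iff b c) \<Longrightarrow> ConstCK (Iff (DiaArr a b) (DiaArr a c))"

end

theory Submission
  imports Defs
begin

text \<open>Conservativity comes from a translation: read every might-conditional as \<open>\<bottom>\<close>.
  This leaves the \<open>\<box>\<rightarrow>\<close>-fragment fixed and sends each axiom of ConstCK to a theorem of
  ConstCK-box, because the \<open>\<diamond>\<rightarrow>\<close>-axioms CN, CK, RA and RC all become instances of
  \<open>\<bottom> \<rightarrow> \<bottom>\<close> (possibly weakened or doubled into \<open>\<bottom> \<leftrightarrow> \<bottom>\<close>).\<close>

fun erase_dia :: "form \<Rightarrow> form" where
  "erase_dia (Atom p) = Atom p"
| "erase_dia Bot = Bot"
| "erase_dia (And a b) = And (erase_dia a) (erase_dia b)"
| "erase_dia (Or a b) = Or (erase_dia a) (erase_dia b)"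
| "erase_dia (Imp a b) = Imp (erase_dia a) (erase_dia b)"
| "erase_dia (BoxArr a b) = BoxArr (erase_dia a) (erase_dia b)"
| "erase_dia (DiaArr a b) = Bot"

lemma box_only_erase_dia: "box_only (erase_dia a)"
  by (induction a) auto

lemma erase_dia_box_only: "box_only a \<Longrightarrow> erase_dia a = a"
  by (induction a) auto

lemma ipc_axiom_erase_dia: "ipc_axiom a \<Longrightarrow> ipc_axiom (erase_dia a)"
  by (induction rule: ipc_axiom.induct) (auto intro: ipc_axiom.intros)

lemma ConstCK_box_weaken:
  assumes "box_only a" "box_only b" "ConstCK_box b"
  shows "ConstCK_box (Imp a b)"
proof (rule ConstCK_box.mp[OF _ assms(3)])
  show "ConstCK_box (Imp b (Imp a b))"
    using assms(1,2) by (auto intro: ConstCK_box.ipc ipc_axiom.intros)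
qed

lemma ConstCK_box_conjI:
  assumes "box_only a" "box_only b" "ConstCK_box a" "ConstCK_box b"
  shows "ConstCK_box (And a b)"
proof -
  have "ConstCK_box (Imp a (Imp b (And a b)))"
    using assms(1,2) by (auto intro: ConstCK_box.ipc ipc_axiom.intros)
  then show ?thesis
    using assms(3,4) by (blast intro: ConstCK_box.mp)
qed

lemma ConstCK_box_Bot_imp_Bot: "ConstCK_box (Imp Bot Bot)"
  by (auto intro: ConstCK_box.ipc ipc_axiom.intros)

lemma ConstCK_box_Iff_Bot_Bot: "ConstCK_box (Iff Bot Bot)"
  unfolding Iff_def by (simp add: ConstCK_box_conjI ConstCK_box_Bot_imp_Bot)

lemma ConstCK_box_erase_dia: "ConstCK a \<Longrightarrow> ConstCK_box (erase_dia a)"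
proof (induction rule: ConstCK.induct)
  case (ipc a)
  then show ?case
    by (auto intro: ConstCK_box.ipc ipc_axiom_erase_dia box_only_erase_dia)
next
  case (mp a b)
  then show ?case by (auto intro: ConstCK_box.mp)
next
  case (CM_box a b c)
  then show ?case by (auto intro: ConstCK_box.CM_box box_only_erase_dia)
next
  case (CC_box a b c)
  then show ?case by (auto intro: ConstCK_box.CC_box box_only_erase_dia)
next
  case (CN_box a)
  then show ?case
    using ConstCK_box.CN_box[OF box_only_erase_dia] by (simp add: Top_def Neg_def)
next
  case (CN_dia a)
  then show ?case by (simp add: Neg_def ConstCK_box_Bot_imp_Bot)
next
  case (CK_dia a b c)
  then show ?case
    by (simp add: ConstCK_box_weaken ConstCK_box_Bot_imp_Bot box_only_erase_dia)
next
  case (RA_box a r b)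
  then show ?case
    using ConstCK_box.RA_box[OF _ box_only_erase_dia] by (simp add: Iff_def)
next
  case (RC_box b c a)
  then show ?case
    using ConstCK_box.RC_box[OF _ box_only_erase_dia] by (simp add: Iff_def)
next
  case (RA_dia a r b)
  then show ?case using ConstCK_box_Iff_Bot_Bot by (simp add: Iff_def)
next
  case (RC_dia b c a)
  then show ?case using ConstCK_box_Iff_Bot_Bot by (simp add: Iff_def)
qed

lemma ConstCK_box_imp_ConstCK: "ConstCK_box a \<Longrightarrow> ConstCK a"
  by (induction rule: ConstCK_box.induct) (auto intro: ConstCK.intros)

theorem theorem6:
  assumes "box_only \<phi>"
  shows "ConstCK \<phi> \<longleftrightarrow> ConstCK_box \<phi>"
proof
  assume "ConstCK \<phi>"
  then show "ConstCK_box \<phi>"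
    using ConstCK_box_erase_dia erase_dia_box_only[OF assms] by metis
next
  assume "ConstCK_box \<phi>"
  then show "ConstCK \<phi>" by (rule ConstCK_box_imp_ConstCK)
qed

end
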